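(* Let $M,N$ be weights of $\mathbb{R}^m,\mathbb{R}^n$, and let $A\in\mathbb{R}^{m\times n}$ with $MA=AN$ (i.e. $I\circ A=A\circ I$) and $\mathcal{R}(A\circ I)$ closed. Let $K\subseteq\mathbb{R}^n$ be a closed cone with $A^{[\dagger]}\circ A\circ K\subseteq K$. Put $$C=A\circ I\circ K,\qquad D=(A^{[\dagger]})^{[*]}\circ I\circ K^{[*]}.$$ Then the following are equivalent: (i) $D$ is acute; (ii) $(A^{[*]}\circ A)^{[\dagger]}\circ K^{[*]}\subseteq K+\mathcal{N}(A\circ I)$; (iii) $C$ is obtuse.
   Context: A weight is a real symmetric matrix $W$ with $W^2=I$. $\mathbb{R}^m$ and $\mathbb{R}^n$ carry weights $M\in\mathbb{R}^{m\times m}$ and $N\in\mathbb{R}^{n\times n}$, respectively. The indefinite inner product on the space with weight $W$ is $[x,y]=\langle x,Wy\rangle$. Indefinite matrix product: if $B$ has $p$ columns and $C'$ has $p$ rows (or is a vector in $\mathbb{R}^p$), $p\in\{m,n\}$, and $W$ is the weight of $\mathbb{R}^p$, then $B\circ C':=BWC'$. $I$ denotes an identity matrix of the appropriate size. Indefinite adjoint of $B\in\mathbb{R}^{p\times q}$: $B^{[*]}:=W_qB^TW_p$, where $W_p,W_q$ are the weights of $\mathbb{R}^p,\mathbb{R}^q$. Indefinite Moore–Penrose inverse: for $B\in\mathbb{R}^{p\times q}$, $B^{[\dagger]}$ is the unique $X\in\mathbb{R}^{q\times p}$ such that - $B\circ X\circ B=B$, - $X\circ B\circ X=X$, - $(B\circ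 X)^{[*]}=B\circ X$, - $(X\circ B)^{[*]}=X\circ B$. It equals $W_qB^\dagger W_p$. Range and null space: for a matrix $B$ with $q$ columns, $\mathcal{R}(B)=\{B\circ x:x\in\mathbb{R}^q\}$ and $\mathcal{N}(B)=\{x\in\mathbb{R}^q:B\circ x=0\}$. A cone is a nonempty set closed under addition and under multiplication by nonnegative scalars. For $S$ a subset of $\mathbb{R}^p$ with weight $W$, the dual is $S^{[*]}=\{x\in\mathbb{R}^p:[x,t]\ge0\ \forall t\in S\}$. For a matrix $B$ and a set $S$, $B\circ S=\{B\circ s:s\in S\}$. The sum of sets is the Minkowski sum. A cone $L$ is acute if $[x,y]\ge0$ for all $x,y\in L$, equivalently $L\subseteq L^{[*]}$. The cone $C=A\circ I\circ K$ is called obtuse if $(A\circ I\circ K)^{[*]}\cap\mathcal{R}(A\circ I)$ is acute. *)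

theory Defs
  imports "HOL-Analysis.Analysis"
begin

text \<open>Matrices are HOL-Analysis matrices; a matrix in R^(p x q) has type real^'q^'p.
  Since the weight of R^p is determined by the space (not by the type index),
  every indefinite operation takes the relevant weight(s) explicitly.\<close>

definition weight :: "real^'p^'p \<Rightarrow> bool" where
  "weight W \<longleftrightarrow> transpose W = W \<and> W ** W = mat 1"

definition iprod :: "real^'p^'p \<Rightarrow> real^'p^'r \<Rightarrow> real^'s^'p \<Rightarrow> real^'s^'r" where
  "iprod W B C = B ** W ** C"

definition iprodv :: "real^'p^'p \<Rightarrow> real^'p^'r \<Rightarrow> real^'p \<Rightarrow> real^'r" where
  "iprodv W B x = B *v (W *v x)"

definition iinner :: "real^'p^'p \<Rightarrow> real^'p \<Rightarrow> real^'p \<Rightarrow> real" where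
  "iinner W x y = x \<bullet> (W *v y)"

definition iadj :: "real^'p^'p \<Rightarrow> real^'q^'q \<Rightarrow> real^'q^'p \<Rightarrow> real^'p^'q" where
  "iadj Wp Wq B = Wq ** transpose B ** Wp"

definition impinv :: "real^'p^'p \<Rightarrow> real^'q^'q \<Rightarrow> real^'q^'p \<Rightarrow> real^'p^'q" where
  "impinv Wp Wq B = (THE X.
      iprod Wp (iprod Wq B X) B = B \<and>
      iprod Wq (iprod Wp X B) X = X \<and>
      iadj Wp Wp (iprod Wq B X) = iprod Wq B X \<and>
      iadj Wq Wq (iprod Wp X B) = iprod Wp X B)"

definition irange :: "real^'q^'q \<Rightarrow> real^'q^'p \<Rightarrow> (real^'p) set" where
  "irange W B = {iprodv W B x | x. True}"

definition inull :: "real^'q^'q \<Rightarrow> real^'q^'p \<Rightarrow> (real^'q) set" where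
  "inull W B = {x. iprodv W B x = 0}"

definition icone :: "(real^'p) set \<Rightarrow> bool" where
  "icone S \<longleftrightarrow> S \<noteq> {} \<and> (\<forall>x\<in>S. \<forall>y\<in>S. x + y \<in> S) \<and> (\<forall>c\<ge>0. \<forall>x\<in>S. c *\<^sub>R x \<in> S)"

definition idual :: "real^'p^'p \<Rightarrow> (real^'p) set \<Rightarrow> (real^'p) set" where
  "idual W S = {x. \<forall>t\<in>S. iinner W x t \<ge> 0}"

definition iimage :: "real^'q^'q \<Rightarrow> real^'q^'p \<Rightarrow> (real^'q) set \<Rightarrow> (real^'p) set" where
  "iimage W B S = (\<lambda>s. iprodv W B s) ` S"

definition msum :: "('a::plus) set \<Rightarrow> 'a set \<Rightarrow> 'a set" where
  "msum S T = {s + t | s t. s \<in> S \<and> t \<in> T}"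

definition acute :: "real^'p^'p \<Rightarrow> (real^'p) set \<Rightarrow> bool" where
  "acute W L \<longleftrightarrow> (\<forall>x\<in>L. \<forall>y\<in>L. iinner W x y \<ge> 0)"

text \<open>C = A o I o K is obtuse iff (A o I o K)^[*] \<inter> R(A o I) is acute (all in R^m with weight M).\<close>
definition obtuse :: "real^'m^'m \<Rightarrow> real^'n^'n \<Rightarrow> real^'n^'m \<Rightarrow> (real^'n) set \<Rightarrow> bool" where
  "obtuse M N A K \<longleftrightarrow>
     acute M (idual M (iimage N (iprod N A (mat 1)) K) \<inter> irange N (iprod N A (mat 1)))"

end

theory Submission
  imports Defs
begin

text \<open>
  Since the weights are symmetric involutions, every indefinite notion reduces to a Euclidean
  one. With \<open>B\<close> the ordinary Moore--Penrose inverse of \<open>A\<close> one has \<open>A^[\<dagger>] = N B M\<close>,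
  \<open>(A^[\<dagger>])^[*] = B^T\<close> and \<open>(A^[*] \<circ> A)^[\<dagger>] \<circ> I = G\<close> where \<open>G = B B^T\<close>; moreover \<open>MA = AN\<close>
  gives \<open>BM = NB\<close>. Let \<open>K'\<close> be the dual cone of \<open>K\<close>.

  Since \<open>[B^T u, B^T v] = [u, G v]\<close>, the cone \<open>D = B^T K'\<close> is acute iff \<open>G K' \<subseteq> K'' = K\<close>, the
  bidual being \<open>K\<close> by separation for the closed convex cone \<open>K\<close>. The projection \<open>BA\<close> is the
  identity on the range of \<open>B\<close>, which contains \<open>G K'\<close>, kills the null space of \<open>A\<close> and maps
  \<open>K\<close> into \<open>K\<close>; so \<open>G K' \<subseteq> K + \<N>(A)\<close> iff \<open>G K' \<subseteq> K\<close>. Finally \<open>C^[*] \<inter> \<R>(A)\<close> equals \<open>D\<close>: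
  \<open>A w \<in> C^[*]\<close> iff \<open>A^T A w \<in> K'\<close>, and \<open>A w = B^T (A^T A w)\<close>; conversely \<open>B^T u = A (G u)\<close> with
  \<open>A^T A G u = BA u \<in> K'\<close>, as \<open>BA\<close> is self-adjoint for \<open>[\<cdot>,\<cdot>]\<close> and maps \<open>K\<close> into \<open>K\<close>.
\<close>

lemma inner_matrix_vector_transpose:
  fixes A :: "real^'n^'m"
  shows "(A *v x) \<bullet> y = x \<bullet> (transpose A *v y)"
  by (metis dot_lmul_matrix inner_commute transpose_matrix_vector)

lemma symmetric_matrixI:
  fixes S :: "real^'n^'n"
  assumes "\<And>x y. (S *v x) \<bullet> y = x \<bullet> (S *v y)"
  shows "transpose S = S"
proof -
  have "transpose S *v y = S *v y" for y
  proof -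
    have "x \<bullet> (transpose S *v y - S *v y) = 0" for x
      using assms[of x y] inner_matrix_vector_transpose[of S x y] by (simp add: inner_diff_right)
    then show ?thesis by (metis eq_iff_diff_eq_0 inner_eq_zero_iff)
  qed
  then show ?thesis by (simp add: matrix_eq)
qed

lemma subspace_range_matrix_vector: "subspace (range (\<lambda>x. (A::real^_^_) *v x))"
  by (simp add: linear_subspace_image)

definition is_pinv :: "real^'q^'p \<Rightarrow> real^'p^'q \<Rightarrow> bool" where
  "is_pinv B X \<longleftrightarrow> B ** X ** B = B \<and> X ** B ** X = X
     \<and> transpose (B ** X) = B ** X \<and> transpose (X ** B) = X ** B"

lemma is_pinvD:
  assumes "is_pinv A B"
  shows "A ** B ** A = A" "B ** A ** B = B"
    "transpose B ** transpose A = A ** B" "transpose A ** transpose B = B ** A"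
    "X1 ** A ** B ** A = X1 ** A" "X2 ** B ** A ** B = X2 ** B"
    "X3 ** transpose B ** transpose A = X3 ** A ** B"
    "X4 ** transpose A ** transpose B = X4 ** B ** A"
  using assms unfolding is_pinv_def
  by (auto simp: matrix_transpose_mul matrix_mul_assoc[symmetric])

lemma is_pinv_unique:
  assumes X: "is_pinv B X" and Y: "is_pinv B Y"
  shows "X = Y"
proof -
  note x = is_pinvD[OF X] and y = is_pinvD[OF Y]
  have BX: "B ** X = B ** Y"
  proof -
    have "B ** X = transpose (B ** X)" using X by (simp add: is_pinv_def)
    also have "\<dots> = transpose ((B ** Y) ** (B ** X))" using y(1) by (simp add: matrix_mul_assoc)
    also have "\<dots> = (B ** X) ** (B ** Y)" using X Y by (simp add: is_pinv_def matrix_transpose_mul)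
    also have "\<dots> = B ** Y" using x(1) by (simp add: matrix_mul_assoc)
    finally show ?thesis .
  qed
  have XB: "X ** B = Y ** B"
  proof -
    have "X ** B = transpose (X ** B)" using X by (simp add: is_pinv_def)
    also have "\<dots> = transpose (X ** (B ** Y ** B))" using y(1) by simp
    also have "\<dots> = transpose ((X ** B) ** (Y ** B))" by (simp add: matrix_mul_assoc)
    also have "\<dots> = (Y ** B) ** (X ** B)" using X Y by (simp add: is_pinv_def matrix_transpose_mul)
    also have "\<dots> = Y ** (B ** X ** B)" by (simp add: matrix_mul_assoc)
    also have "\<dots> = Y ** B" using x(1) by simp
    finally show ?thesis .
  qed
  have "X = (X ** B) ** X" using x(2) by (simp add: matrix_mul_assoc)
  also have "\<dots> = Y ** (B ** Y)" using BX XB by (metis matrix_mul_assoc)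
  also have "\<dots> = Y" using y(2) by (simp add: matrix_mul_assoc)
  finally show ?thesis .
qed

text \<open>
  The minimum-norm least-squares solution of \<open>A x = y\<close> is linear in \<open>y\<close>, and its matrix
  satisfies the Penrose equations; this is how the Moore--Penrose inverse is shown to exist.
\<close>

definition min_norm_lsq :: "real^'n^'m \<Rightarrow> real^'m \<Rightarrow> real^'n" where
  "min_norm_lsq A y = (SOME x. x \<in> range (\<lambda>z. transpose A *v z)
                          \<and> (\<forall>w. (A *v x - y) \<bullet> (A *v w) = 0))"

lemma min_norm_lsq_exists:
  fixes A :: "real^'n^'m"
  shows "\<exists>x. x \<in> range (\<lambda>z. transpose A *v z) \<and> (\<forall>w. (A *v x - y) \<bullet> (A *v w) = 0)"
proof -
  obtain y1 z where y1: "y1 \<in> span (range (\<lambda>w. A *v w))"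
    and z: "\<And>w. w \<in> span (range (\<lambda>w. A *v w)) \<Longrightarrow> orthogonal z w" and yz: "y = y1 + z"
    using orthogonal_subspace_decomp_exists by blast
  have "y1 \<in> range (\<lambda>w. A *v w)" using y1 span_eq_iff subspace_range_matrix_vector by blast
  then obtain x' where x': "y1 = A *v x'" by auto
  obtain x z' where x: "x \<in> span (range (\<lambda>z. transpose A *v z))"
    and z': "\<And>w. w \<in> span (range (\<lambda>z. transpose A *v z)) \<Longrightarrow> orthogonal z' w"
    and xz: "x' = x + z'"
    using orthogonal_subspace_decomp_exists by blast
  have "orthogonal z' (transpose A *v (A *v z'))" using z' span_base by blast
  then have "(A *v z') \<bullet> (A *v z') = 0"
    by (simp add: inner_matrix_vector_transpose orthogonal_def)
  then have "A *v z' = 0" by simp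
  then have Ax: "A *v x = y1" using x' xz by (simp add: matrix_vector_right_distrib)
  have "(A *v x - y) \<bullet> (A *v w) = 0" for w
  proof -
    have "orthogonal z (A *v w)" using z span_base by blast
    then show ?thesis using Ax yz by (simp add: orthogonal_def)
  qed
  moreover have "x \<in> range (\<lambda>z. transpose A *v z)"
    using x span_eq_iff subspace_range_matrix_vector by blast
  ultimately show ?thesis by blast
qed

lemma min_norm_lsq_unique:
  fixes A :: "real^'n^'m"
  assumes "x1 \<in> range (\<lambda>z. transpose A *v z)" "\<forall>w. (A *v x1 - y) \<bullet> (A *v w) = 0"
    and "x2 \<in> range (\<lambda>z. transpose A *v z)" "\<forall>w. (A *v x2 - y) \<bullet> (A *v w) = 0"
  shows "x1 = x2"
proof -
  obtain z1 z2 where z: "x1 = transpose A *v z1" "x2 = transpose A *v z2" using assms by auto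
  define d where "d = x1 - x2"
  have dz: "d = transpose A *v (z1 - z2)"
    using z by (simp add: d_def matrix_vector_mult_diff_distrib)
  have "(A *v d) \<bullet> (A *v w) = (A *v x1 - y) \<bullet> (A *v w) - (A *v x2 - y) \<bullet> (A *v w)" for w
    by (simp add: d_def matrix_vector_mult_diff_distrib inner_diff_left)
  then have "(A *v d) \<bullet> (A *v d) = 0" using assms by simp
  then have Ad: "A *v d = 0" by simp
  have "d \<bullet> d = (z1 - z2) \<bullet> (A *v d)"
    using dz inner_matrix_vector_transpose[of "transpose A" "z1 - z2" d] by simp
  then have "d = 0" using Ad by simp
  then show ?thesis by (simp add: d_def)
qed

lemma min_norm_lsq:
  "min_norm_lsq A y \<in> range (\<lambda>z. transpose A *v z)
   \<and> (\<forall>w. (A *v min_norm_lsq A y - y) \<bullet> (A *v w) = 0)"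
  unfolding min_norm_lsq_def by (rule someI_ex, rule min_norm_lsq_exists)

lemma min_norm_lsq_eqI:
  assumes "x \<in> range (\<lambda>z. transpose A *v z)" "\<forall>w. (A *v x - y) \<bullet> (A *v w) = 0"
  shows "min_norm_lsq A y = x"
  using min_norm_lsq_unique[OF _ _ assms] min_norm_lsq by blast

lemma linear_min_norm_lsq: "linear (min_norm_lsq A)"
proof (rule linearI)
  fix y1 y2
  obtain u1 u2 where u: "min_norm_lsq A y1 = transpose A *v u1" "min_norm_lsq A y2 = transpose A *v u2"
    using min_norm_lsq by blast
  show "min_norm_lsq A (y1 + y2) = min_norm_lsq A y1 + min_norm_lsq A y2"
  proof (rule min_norm_lsq_eqI)
    show "min_norm_lsq A y1 + min_norm_lsq A y2 \<in> range (\<lambda>z. transpose A *v z)"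
      using u by (metis matrix_vector_right_distrib rangeI)
    show "\<forall>w. (A *v (min_norm_lsq A y1 + min_norm_lsq A y2) - (y1 + y2)) \<bullet> (A *v w) = 0"
    proof
      fix w
      have "(A *v (min_norm_lsq A y1 + min_norm_lsq A y2) - (y1 + y2)) \<bullet> (A *v w)
          = (A *v min_norm_lsq A y1 - y1) \<bullet> (A *v w) + (A *v min_norm_lsq A y2 - y2) \<bullet> (A *v w)"
        by (simp add: matrix_vector_right_distrib inner_add_left inner_diff_left)
      then show "(A *v (min_norm_lsq A y1 + min_norm_lsq A y2) - (y1 + y2)) \<bullet> (A *v w) = 0"
        using min_norm_lsq[of A y1] min_norm_lsq[of A y2] by simp
    qed
  qed
next
  fix r y
  obtain u where u: "min_norm_lsq A y = transpose A *v u" using min_norm_lsq by blast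
  show "min_norm_lsq A (r *\<^sub>R y) = r *\<^sub>R min_norm_lsq A y"
  proof (rule min_norm_lsq_eqI)
    show "r *\<^sub>R min_norm_lsq A y \<in> range (\<lambda>z. transpose A *v z)"
      using u by (metis matrix_vector_mult_scaleR rangeI)
    show "\<forall>w. (A *v (r *\<^sub>R min_norm_lsq A y) - r *\<^sub>R y) \<bullet> (A *v w) = 0"
    proof
      fix w
      have "(A *v (r *\<^sub>R min_norm_lsq A y) - r *\<^sub>R y) \<bullet> (A *v w)
          = r * ((A *v min_norm_lsq A y - y) \<bullet> (A *v w))"
        by (simp add: matrix_vector_mult_scaleR inner_diff_left algebra_simps)
      then show "(A *v (r *\<^sub>R min_norm_lsq A y) - r *\<^sub>R y) \<bullet> (A *v w) = 0"
        using min_norm_lsq[of A y] by simp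
    qed
  qed
qed

lemma matrix_min_norm_lsq_apply: "matrix (min_norm_lsq A) *v y = min_norm_lsq A y"
  by (metis matrix_vector_mul(2)[OF linear_min_norm_lsq])

lemma min_norm_lsq_solves: "A *v min_norm_lsq A (A *v x) = A *v x"
proof -
  have "(A *v min_norm_lsq A (A *v x) - A *v x) \<bullet> (A *v (min_norm_lsq A (A *v x) - x)) = 0"
    using min_norm_lsq by blast
  then show ?thesis by (simp add: matrix_vector_mult_diff_distrib)
qed

lemma is_pinv_matrix_min_norm_lsq: "is_pinv A (matrix (min_norm_lsq A))"
proof -
  let ?X = "matrix (min_norm_lsq A)"
  have 1: "A ** ?X ** A = A"
    by (simp add: matrix_eq matrix_vector_mul_assoc[symmetric] matrix_min_norm_lsq_apply
        min_norm_lsq_solves)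
  have "min_norm_lsq A (A *v min_norm_lsq A y) = min_norm_lsq A y" for y
    by (rule min_norm_lsq_eqI) (use min_norm_lsq in auto)
  then have 2: "?X ** A ** ?X = ?X"
    by (simp add: matrix_eq matrix_vector_mul_assoc[symmetric] matrix_min_norm_lsq_apply)
  have 3: "transpose (A ** ?X) = A ** ?X"
  proof (rule symmetric_matrixI)
    have a: "(A *v min_norm_lsq A x) \<bullet> y = (A *v min_norm_lsq A x) \<bullet> (A *v min_norm_lsq A y)"
      for x y
    proof -
      have "(A *v min_norm_lsq A y - y) \<bullet> (A *v min_norm_lsq A x) = 0"
        using min_norm_lsq by blast
      then have "(A *v min_norm_lsq A x) \<bullet> (A *v min_norm_lsq A y - y) = 0"
        by (simp add: inner_commute)
      then show ?thesis by (simp add: inner_diff_right)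
    qed
    show "((A ** ?X) *v x) \<bullet> y = x \<bullet> ((A ** ?X) *v y)" for x y
      using a[of x y] a[of y x]
      by (simp add: matrix_vector_mul_assoc[symmetric] matrix_min_norm_lsq_apply inner_commute)
  qed
  have 4: "transpose (?X ** A) = ?X ** A"
  proof (rule symmetric_matrixI)
    have a: "min_norm_lsq A (A *v x) \<bullet> y
           = min_norm_lsq A (A *v x) \<bullet> min_norm_lsq A (A *v y)" for x y
    proof -
      obtain u where u: "min_norm_lsq A (A *v x) = transpose A *v u" using min_norm_lsq by blast
      have "min_norm_lsq A (A *v x) \<bullet> (y - min_norm_lsq A (A *v y))
          = u \<bullet> (A *v (y - min_norm_lsq A (A *v y)))"
        using u inner_matrix_vector_transpose[of "transpose A" u] by simp
      also have "\<dots> = 0" by (simp add: matrix_vector_mult_diff_distrib min_norm_lsq_solves)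
      finally show ?thesis by (simp add: inner_diff_right)
    qed
    show "((?X ** A) *v x) \<bullet> y = x \<bullet> ((?X ** A) *v y)" for x y
      using a[of x y] a[of y x]
      by (simp add: matrix_vector_mul_assoc[symmetric] matrix_min_norm_lsq_apply inner_commute)
  qed
  show ?thesis using 1 2 3 4 by (simp add: is_pinv_def)
qed

definition pinv :: "real^'q^'p \<Rightarrow> real^'p^'q" where
  "pinv B = (THE X. is_pinv B X)"

lemma is_pinv_pinv: "is_pinv B (pinv B)"
  unfolding pinv_def
  using theI[of "is_pinv B" "matrix (min_norm_lsq B)"] is_pinv_matrix_min_norm_lsq is_pinv_unique
  by blast

lemma pinv_eqI: "is_pinv B X \<Longrightarrow> pinv B = X"
  using is_pinv_unique is_pinv_pinv by blast

lemma pinv_gram_identities: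
  fixes A :: "real^'n^'m"
  shows "transpose (pinv A) ** transpose A ** A = A"
    and "transpose (pinv A) ** pinv A ** A = transpose (pinv A)"
    and "transpose A ** A ** pinv A ** transpose (pinv A) = pinv A ** A"
    and "pinv A ** A ** transpose A = transpose A"
proof -
  note a = is_pinvD[OF is_pinv_pinv[of A]]
  let ?B = "pinv A"
  show "transpose ?B ** transpose A ** A = A" using a by (metis matrix_mul_assoc)
  have "transpose ?B ** (transpose A ** transpose ?B) = transpose ?B"
    using arg_cong[OF a(2), of transpose] by (simp add: matrix_transpose_mul matrix_mul_assoc)
  then show "transpose ?B ** ?B ** A = transpose ?B" using a by (simp add: matrix_mul_assoc)
  have "transpose A ** A ** ?B ** transpose ?B
      = (transpose A ** transpose ?B) ** (transpose A ** transpose ?B)"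
    using a(3) by (metis matrix_mul_assoc)
  also have "\<dots> = ?B ** A" using a(2,4) by (simp add: matrix_mul_assoc)
  finally show "transpose A ** A ** ?B ** transpose ?B = ?B ** A" .
  have "(transpose A ** transpose ?B) ** transpose A = transpose A"
    using arg_cong[OF a(1), of transpose] by (simp add: matrix_transpose_mul matrix_mul_assoc)
  then show "?B ** A ** transpose A = transpose A" using a by simp
qed

lemma pinv_gram: "pinv (transpose A ** A) = pinv A ** transpose (pinv A)"
proof (rule pinv_eqI)
  note a = is_pinvD[OF is_pinv_pinv[of A]] and g = pinv_gram_identities[of A]
  let ?B = "pinv A"
  have "X ** transpose ?B ** transpose A ** A = X ** A" for X :: "real^_^_"
    using g(1) by (metis matrix_mul_assoc)
  moreover have "X ** transpose ?B ** ?B ** A = X ** transpose ?B" for X :: "real^_^_"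
    using g(2) by (metis matrix_mul_assoc)
  moreover have "X ** transpose A ** A ** ?B ** transpose ?B = X ** ?B ** A" for X :: "real^_^_"
    using g(3) by (metis matrix_mul_assoc)
  moreover have "X ** ?B ** A ** transpose A = X ** transpose A" for X :: "real^_^_"
    using g(4) by (metis matrix_mul_assoc)
  ultimately show "is_pinv (transpose A ** A) (?B ** transpose ?B)"
    unfolding is_pinv_def
    by (simp add: matrix_mul_assoc a g matrix_transpose_mul)
qed

lemma weightD:
  assumes "weight W"
  shows "transpose W = W" "W ** W = mat 1" "X ** W ** W = X" "W *v (W *v v) = v"
  using assms by (auto simp: weight_def matrix_mul_assoc[symmetric] matrix_vector_mul_assoc)

lemma weight_mat_1: "weight (mat 1)"
  by (simp add: weight_def)

lemma weight_mult_left_eq_iff: "weight W \<Longrightarrow> W ** Y = Z \<longleftrightarrow> Y = W ** Z"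
  by (metis matrix_mul_assoc matrix_mul_lid weightD(2))

lemma weight_mult_right_eq_iff: "weight W \<Longrightarrow> Y ** W = Z \<longleftrightarrow> Y = Z ** W"
  by (metis weightD(3))

lemma weight_conj_eq_iff:
  "weight V \<Longrightarrow> weight W \<Longrightarrow> V ** Y ** W = V ** Z ** W \<longleftrightarrow> Y = Z"
  by (metis weight_mult_left_eq_iff weight_mult_right_eq_iff)

lemma weight_self_adjoint_iff:
  assumes W: "weight W"
  shows "W ** transpose S ** W = S \<longleftrightarrow> transpose (S ** W) = S ** W"
    and "W ** transpose S ** W = S \<longleftrightarrow> transpose (W ** S) = W ** S"
proof -
  show "W ** transpose S ** W = S \<longleftrightarrow> transpose (S ** W) = S ** W"
    using weight_mult_right_eq_iff[OF W, of "W ** transpose S" S] W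
    by (simp add: matrix_transpose_mul weightD)
  show "W ** transpose S ** W = S \<longleftrightarrow> transpose (W ** S) = W ** S"
    using weight_mult_left_eq_iff[OF W, of "transpose S ** W" S] W
    by (simp add: matrix_transpose_mul weightD matrix_mul_assoc)
qed

lemma weight_inner: "weight N \<Longrightarrow> (N *v a) \<bullet> (N *v t) = a \<bullet> (t::real^_)"
  by (simp add: inner_matrix_vector_transpose weightD)

lemma pinv_weight_conj:
  assumes V: "weight V" and W: "weight W"
  shows "pinv (V ** A ** W) = W ** pinv A ** V"
proof (rule pinv_eqI)
  note a = is_pinvD[OF is_pinv_pinv[of A]]
  show "is_pinv (V ** A ** W) (W ** pinv A ** V)"
    unfolding is_pinv_def
    by (simp add: matrix_mul_assoc a weightD[OF V] weightD[OF W] matrix_transpose_mul)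
qed

lemma pinv_intertwine:
  assumes M: "weight M" and N: "weight N" and MA: "M ** A = A ** N"
  shows "pinv A ** M = N ** pinv A"
proof -
  have "pinv A = N ** pinv A ** M"
    using pinv_weight_conj[OF M N, of A] MA N by (simp add: weightD)
  then have "pinv A ** M = N ** pinv A ** M ** M" by simp
  also have "\<dots> = N ** pinv A" using M by (simp add: weightD)
  finally show ?thesis .
qed

lemma impinv_eq_pinv:
  fixes Wp :: "real^'p^'p" and Wq :: "real^'q^'q" and B :: "real^'q^'p"
  assumes p: "weight Wp" and q: "weight Wq"
  shows "impinv Wp Wq B = Wq ** pinv B ** Wp"
proof -
  have "iprod Wp (iprod Wq B X) B = B \<and> iprod Wq (iprod Wp X B) X = X
      \<and> iadj Wp Wp (iprod Wq B X) = iprod Wq B X \<and> iadj Wq Wq (iprod Wp X B) = iprod Wp X B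
      \<longleftrightarrow> is_pinv B (Wq ** X ** Wp)" for X
  proof -
    have "X ** Wp ** B ** Wq ** X = X
        \<longleftrightarrow> Wq ** X ** Wp ** B ** (Wq ** X ** Wp) = Wq ** X ** Wp"
      using weight_conj_eq_iff[OF q p, of "X ** Wp ** B ** Wq ** X" X] by (simp add: matrix_mul_assoc)
    moreover have "Wp ** transpose (B ** Wq ** X) ** Wp = B ** Wq ** X
        \<longleftrightarrow> transpose (B ** (Wq ** X ** Wp)) = B ** (Wq ** X ** Wp)"
      using weight_self_adjoint_iff(1)[OF p, of "B ** Wq ** X"] by (simp add: matrix_mul_assoc)
    moreover have "Wq ** transpose (X ** Wp ** B) ** Wq = X ** Wp ** B
        \<longleftrightarrow> transpose (Wq ** X ** Wp ** B) = Wq ** X ** Wp ** B"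
      using weight_self_adjoint_iff(2)[OF q, of "X ** Wp ** B"] by (simp add: matrix_mul_assoc)
    ultimately show ?thesis
      by (simp add: is_pinv_def iprod_def iadj_def matrix_mul_assoc)
  qed
  moreover have "is_pinv B (Wq ** X ** Wp) \<longleftrightarrow> X = Wq ** pinv B ** Wp" for X
    using pinv_eqI[of B "Wq ** X ** Wp"] is_pinv_pinv[of B] p q
    by (auto simp: matrix_mul_assoc weightD)
  ultimately show ?thesis
    unfolding impinv_def by simp
qed

lemma icone_convex: "icone K \<Longrightarrow> convex K"
  unfolding icone_def convex_def by blast

lemma icone_zero: "icone K \<Longrightarrow> 0 \<in> K"
  unfolding icone_def by (metis all_not_in_conv order_refl scaleR_zero_left)

lemma idual_separation:
  fixes K :: "(real^'n) set" and N :: "real^'n^'n"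
  assumes "closed K" "icone K" "weight N" "x \<notin> K"
  shows "\<exists>u \<in> idual N K. iinner N u x < 0"
proof -
  obtain a b where ab: "a \<bullet> x < b" "\<forall>y\<in>K. b < a \<bullet> y"
    using separating_hyperplane_closed_point[OF icone_convex[OF assms(2)] assms(1) assms(4)] by blast
  have b0: "b < 0" using ab icone_zero[OF assms(2)] by force
  have pos: "a \<bullet> t \<ge> 0" if t: "t \<in> K" for t
  proof (rule ccontr)
    assume "\<not> a \<bullet> t \<ge> 0"
    then have neg: "a \<bullet> t < 0" by simp
    then have "(b / (a \<bullet> t)) *\<^sub>R t \<in> K"
      using t b0 assms(2) unfolding icone_def by (simp add: divide_nonpos_neg)
    then show False using ab neg by fastforce
  qed
  have "N *v a \<in> idual N K"
    unfolding idual_def iinner_def using pos weight_inner[OF assms(3)] by simp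
  moreover have "iinner N (N *v a) x < 0"
    unfolding iinner_def using weight_inner[OF assms(3)] ab b0 by simp
  ultimately show ?thesis by blast
qed

(* Otherwise simp turns transpose B *v x into x v* B, out of reach of the rules used below. *)
declare transpose_matrix_vector [simp del]

lemma iinner_transpose_image:
  fixes B :: "real^'m^'n"
  assumes "B ** M = N ** B"
  shows "iinner M (transpose B *v u) (transpose B *v v) = iinner N u ((B ** transpose B) *v v)"
proof -
  have "iinner M (transpose B *v u) (transpose B *v v) = u \<bullet> ((B ** M ** transpose B) *v v)"
    by (simp add: iinner_def inner_matrix_vector_transpose matrix_vector_mul_assoc matrix_mul_assoc)
  also have "\<dots> = u \<bullet> ((N ** (B ** transpose B)) *v v)"
    using assms by (simp add: matrix_mul_assoc)
  finally show ?thesis by (simp add: iinner_def matrix_vector_mul_assoc)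
qed

lemma acute_transpose_image_iff:
  fixes B :: "real^'m^'n"
  assumes "weight N" "B ** M = N ** B" "closed K" "icone K"
  shows "acute M ((\<lambda>s. transpose B *v s) ` idual N K)
     \<longleftrightarrow> (\<lambda>s. (B ** transpose B) *v s) ` idual N K \<subseteq> K"
proof
  assume acute: "acute M ((\<lambda>s. transpose B *v s) ` idual N K)"
  show "(\<lambda>s. (B ** transpose B) *v s) ` idual N K \<subseteq> K"
  proof (rule image_subsetI, rule ccontr)
    fix v assume v: "v \<in> idual N K" and notin: "(B ** transpose B) *v v \<notin> K"
    obtain u where u: "u \<in> idual N K" "iinner N u ((B ** transpose B) *v v) < 0"
      using idual_separation[OF assms(3,4,1) notin] by blast
    have "iinner M (transpose B *v u) (transpose B *v v) \<ge> 0"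
      using acute u v unfolding acute_def by blast
    then show False using u iinner_transpose_image[OF assms(2)] by simp
  qed
next
  assume "(\<lambda>s. (B ** transpose B) *v s) ` idual N K \<subseteq> K"
  then have "iinner N u ((B ** transpose B) *v v) \<ge> 0" if "u \<in> idual N K" "v \<in> idual N K" for u v
    using that unfolding idual_def by blast
  then show "acute M ((\<lambda>s. transpose B *v s) ` idual N K)"
    unfolding acute_def by (auto simp: iinner_transpose_image[OF assms(2)])
qed

lemma subset_msum_null_iff:
  fixes A :: "real^'n^'m"
  assumes PK: "(\<lambda>t. (pinv A ** A) *v t) ` K \<subseteq> K"
    and S: "S \<subseteq> range (\<lambda>y. pinv A *v y)"
  shows "S \<subseteq> msum K {z. A *v z = 0} \<longleftrightarrow> S \<subseteq> K"
proof
  assume sum: "S \<subseteq> msum K {z. A *v z = 0}"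
  show "S \<subseteq> K"
  proof
    fix x assume "x \<in> S"
    then obtain y k z where x: "x = pinv A *v y" "x = k + z" and "k \<in> K" "A *v z = 0"
      using sum S unfolding msum_def by blast
    have "x = (pinv A ** A) *v x"
      using x(1) is_pinvD(2)[OF is_pinv_pinv[of A]] by (simp add: matrix_vector_mul_assoc)
    also have "\<dots> = (pinv A ** A) *v k"
      using x(2) \<open>A *v z = 0\<close>
      by (simp add: matrix_vector_right_distrib matrix_vector_mul_assoc[symmetric])
    finally show "x \<in> K" using PK \<open>k \<in> K\<close> by auto
  qed
next
  assume "S \<subseteq> K"
  then show "S \<subseteq> msum K {z. A *v z = 0}"
    unfolding msum_def by force
qed

lemma idual_image_inter_range_eq:
  fixes A :: "real^'n^'m"
  assumes MA: "M ** A = A ** N" and BM: "pinv A ** M = N ** pinv A"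
    and PK: "(\<lambda>t. (pinv A ** A) *v t) ` K \<subseteq> K"
  shows "idual M ((\<lambda>s. A *v s) ` K) \<inter> range (\<lambda>x. A *v x)
       = (\<lambda>s. transpose (pinv A) *v s) ` idual N K"
proof -
  let ?B = "pinv A"
  note g = pinv_gram_identities[of A]
  have "iinner M (A *v w) (A *v t) = iinner N ((transpose A ** A) *v w) t" for w t
  proof -
    have "iinner M (A *v w) (A *v t) = w \<bullet> ((transpose A ** M ** A) *v t)"
      by (simp add: iinner_def inner_matrix_vector_transpose matrix_vector_mul_assoc matrix_mul_assoc)
    also have "\<dots> = w \<bullet> ((transpose A ** (A ** N)) *v t)"
      using MA by (metis matrix_mul_assoc)
    finally show ?thesis
      by (simp add: iinner_def inner_matrix_vector_transpose matrix_vector_mul_assoc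
          matrix_transpose_mul matrix_mul_assoc)
  qed
  then have dual_iff: "A *v w \<in> idual M ((\<lambda>s. A *v s) ` K) \<longleftrightarrow> (transpose A ** A) *v w \<in> idual N K"
    for w
    unfolding idual_def by auto
  have "iinner N ((?B ** A) *v u) t = iinner N u ((?B ** A) *v t)" for u t
  proof -
    have "?B ** A ** N = N ** (?B ** A)"
      using MA BM by (metis matrix_mul_assoc)
    moreover have "transpose (?B ** A) = ?B ** A"
      using is_pinv_pinv[of A] by (simp add: is_pinv_def)
    ultimately show ?thesis
      by (simp add: iinner_def inner_matrix_vector_transpose matrix_vector_mul_assoc)
  qed
  then have P_dual: "(?B ** A) *v u \<in> idual N K" if "u \<in> idual N K" for u
    using that PK unfolding idual_def by auto
  show ?thesis
  proof (intro equalityI subsetI)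
    fix x assume "x \<in> idual M ((\<lambda>s. A *v s) ` K) \<inter> range (\<lambda>x. A *v x)"
    then obtain w where "x = A *v w" "(transpose A ** A) *v w \<in> idual N K"
      using dual_iff by blast
    moreover have "A *v w = transpose ?B *v ((transpose A ** A) *v w)"
      using g(1) by (simp add: matrix_vector_mul_assoc matrix_mul_assoc)
    ultimately show "x \<in> (\<lambda>s. transpose ?B *v s) ` idual N K" by blast
  next
    fix x assume "x \<in> (\<lambda>s. transpose ?B *v s) ` idual N K"
    then obtain u where u: "u \<in> idual N K" "x = transpose ?B *v u" by blast
    have CG: "(transpose A ** A) *v ((?B ** transpose ?B) *v u) = (?B ** A) *v u"
      using g(3) by (simp add: matrix_vector_mul_assoc matrix_mul_assoc)
    have "x = transpose ?B *v ((?B ** A) *v u)"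
      using u(2) g(2) by (simp add: matrix_vector_mul_assoc matrix_mul_assoc)
    also have "\<dots> = A *v ((?B ** transpose ?B) *v u)"
      using CG g(1) by (metis matrix_vector_mul_assoc)
    finally show "x \<in> idual M ((\<lambda>s. A *v s) ` K) \<inter> range (\<lambda>x. A *v x)"
      using dual_iff CG P_dual[OF u(1)] by auto
  qed
qed

lemma iimage_eq_image: "iimage W B S = (\<lambda>s. (B ** W) *v s) ` S"
  by (simp add: iimage_def iprodv_def matrix_vector_mul_assoc)

lemma irange_eq_range: "irange W B = range (\<lambda>x. (B ** W) *v x)"
  by (auto simp: irange_def iprodv_def matrix_vector_mul_assoc)

lemma inull_eq_null: "inull W B = {x. (B ** W) *v x = 0}"
  by (simp add: inull_def iprodv_def matrix_vector_mul_assoc)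

lemma iadj_impinv:
  assumes "weight M" "weight N"
  shows "iadj N M (impinv M N A) = transpose (pinv A)"
  using assms by (simp add: impinv_eq_pinv iadj_def matrix_transpose_mul weightD matrix_mul_assoc)

lemma iprod_impinv_self:
  assumes M: "weight M" and N: "weight N" and MA: "M ** A = A ** N"
  shows "iprod M (impinv M N A) A = pinv A ** A ** N"
proof -
  have "iprod M (impinv M N A) A = N ** pinv A ** A"
    using M N by (simp add: impinv_eq_pinv iprod_def weightD matrix_mul_assoc)
  also have "\<dots> = pinv A ** (M ** A)"
    using pinv_intertwine[OF M N MA] by (simp add: matrix_mul_assoc)
  finally show ?thesis using MA by (simp add: matrix_mul_assoc)
qed

lemma impinv_gram:
  assumes M: "weight M" and N: "weight N" and MA: "M ** A = A ** N"
  shows "impinv N N (iprod M (iadj M N A) A) = pinv A ** transpose (pinv A) ** N"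
proof -
  have BM: "pinv A ** M = N ** pinv A" using pinv_intertwine[OF M N MA] .
  have MBt: "M ** transpose (pinv A) = transpose (pinv A) ** N"
    using arg_cong[OF BM, of transpose] M N by (simp add: matrix_transpose_mul weightD)
  have "iprod M (iadj M N A) A = N ** (transpose A ** A)"
    using M by (simp add: iprod_def iadj_def weightD matrix_mul_assoc)
  then have "impinv N N (iprod M (iadj M N A) A) = N ** (pinv (transpose A ** A) ** N) ** N"
    using impinv_eq_pinv[OF N N] pinv_weight_conj[OF N weight_mat_1, of "transpose A ** A"] by simp
  also have "\<dots> = N ** pinv A ** transpose (pinv A)"
    using N by (simp add: pinv_gram weightD matrix_mul_assoc)
  also have "\<dots> = pinv A ** (M ** transpose (pinv A))"
    using BM by (simp add: matrix_mul_assoc)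
  finally show ?thesis using MBt by (simp add: matrix_mul_assoc)
qed

theorem theorem3p16:
  fixes M :: "real^'m^'m" and N :: "real^'n^'n" and A :: "real^'n^'m"
    and K :: "(real^'n) set"
  assumes "weight M" and "weight N"
    and "iprod M (mat 1) A = iprod N A (mat 1)"
    and "closed (irange N (iprod N A (mat 1)))"
    and "closed K" and "icone K"
    and "iimage N (iprod M (impinv M N A) A) K \<subseteq> K"
  shows "(acute M (iimage N (iprod N (iadj N M (impinv M N A)) (mat 1)) (idual N K))
            \<longleftrightarrow> iimage N (impinv N N (iprod M (iadj M N A) A)) (idual N K)
                  \<subseteq> msum K (inull N (iprod N A (mat 1))))
       \<and> (iimage N (impinv N N (iprod M (iadj M N A) A)) (idual N K)
                  \<subseteq> msum K (inull N (iprod N A (mat 1)))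
            \<longleftrightarrow> obtuse M N A K)"
proof -
  note M = assms(1) and N = assms(2)
  have MA: "M ** A = A ** N" using assms(3) by (simp add: iprod_def)
  have BM: "pinv A ** M = N ** pinv A" using pinv_intertwine[OF M N MA] .
  have D: "iimage N (iprod N (iadj N M (impinv M N A)) (mat 1)) (idual N K)
      = (\<lambda>s. transpose (pinv A) *v s) ` idual N K"
    using M N by (simp add: iimage_eq_image iprod_def iadj_impinv weightD)
  have G: "iimage N (impinv N N (iprod M (iadj M N A) A)) (idual N K)
      = (\<lambda>s. (pinv A ** transpose (pinv A)) *v s) ` idual N K"
    using N by (simp add: iimage_eq_image impinv_gram[OF M N MA] weightD)
  have null: "inull N (iprod N A (mat 1)) = {z. A *v z = 0}"
    using N by (simp add: inull_eq_null iprod_def weightD)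
  have obtuse: "obtuse M N A K \<longleftrightarrow> acute M (idual M ((\<lambda>s. A *v s) ` K) \<inter> range (\<lambda>x. A *v x))"
    using N by (simp add: obtuse_def iimage_eq_image irange_eq_range iprod_def weightD)
  have PK: "(\<lambda>t. (pinv A ** A) *v t) ` K \<subseteq> K"
    using assms(7) N by (simp add: iimage_eq_image iprod_impinv_self[OF M N MA] weightD)
  have "(\<lambda>s. (pinv A ** transpose (pinv A)) *v s) ` idual N K \<subseteq> range (\<lambda>y. pinv A *v y)"
    by (auto simp: matrix_vector_mul_assoc[symmetric])
  then show ?thesis
    unfolding D G null obtuse
    using acute_transpose_image_iff[OF N BM assms(5,6)] subset_msum_null_iff[OF PK]
      idual_image_inter_range_eq[OF MA BM PK]
    by simp
qed

end
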